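(* Let $S$ be a numerical semigroup. If $S$ is telescopic, then $\mathrm{Ap}(S)$ is $\beta$-rectangular. The converse fails: $S=\langle 4,5,6\rangle$ has $\alpha$-rectangular (hence $\beta$-rectangular) Apéry set but is not telescopic.
   Context: A numerical semigroup is a submonoid $S$ of $(\mathbb N,+)$ with finite complement in $\mathbb N$; $g_1<\dots<g_\nu$ is its minimal system of generators, $m=g_1$, and $\mathrm{Ap}(S)=\{s\in S: s-m\notin S\}$. A representation of $s\in S$ is an expression $s=\sum_{i=1}^\nu\lambda_ig_i$, $\lambda_i\in\mathbb N$; $\mathrm{ord}(s)$ is the maximum of $\sum\lambda_i$ over all representations. For $i=2,\dots,\nu$: $\tau_i=\min\{h\in\mathbb N: hg_i\in\langle g_1,\dots,g_{i-1}\rangle\}-1$; $\alpha_i=\max\{h\in\mathbb N: hg_i\in\mathrm{Ap}(S)\}$; $\beta_i=\max\{h\in\mathbb N: hg_i\in\mathrm{Ap}(S),\ \mathrm{ord}(hg_i)=h\}$. $S$ is telescopic if $\mathrm{Ap}(S)=\{\sum_{i=2}^\nu\lambda_ig_i: 0\le\lambda_i\le\tau_i\}$. For $\delta\in\{\alpha,\beta\}$, $\mathrm{Ap}(S)$ is $\delta$-rectangular if $\mathrm{Ap}(S)=\{\sum_{i=2}^\nu\lambda_ig_i: 0\le\lambda_i\le\delta_i\}$. *)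

theory Defs
  imports Main
begin

definition numerical_semigroup :: "nat set \<Rightarrow> bool" where
  "numerical_semigroup S \<longleftrightarrow> 0 \<in> S \<and> (\<forall>a\<in>S. \<forall>b\<in>S. a + b \<in> S) \<and> finite (UNIV - S)"

definition msg :: "nat set \<Rightarrow> nat set" where
  "msg S = {x \<in> S. x \<noteq> 0 \<and> \<not> (\<exists>a\<in>S. \<exists>b\<in>S. a \<noteq> 0 \<and> b \<noteq> 0 \<and> x = a + b)}"

text \<open>Embedding dimension nu and the generators g_1 < ... < g_nu (1-indexed).\<close>
definition emb :: "nat set \<Rightarrow> nat" where
  "emb S = card (msg S)"

definition gen :: "nat set \<Rightarrow> nat \<Rightarrow> nat" where
  "gen S i = sorted_list_of_set (msg S) ! (i - 1)"

definition multiplicity :: "nat set \<Rightarrow> nat" where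
  "multiplicity S = gen S 1"

definition Apery :: "nat set \<Rightarrow> nat set" where
  "Apery S = {s \<in> S. \<not> (\<exists>t\<in>S. s = t + multiplicity S)}"

definition is_repr :: "nat set \<Rightarrow> nat \<Rightarrow> (nat \<Rightarrow> nat) \<Rightarrow> bool" where
  "is_repr S s l \<longleftrightarrow> s = (\<Sum>i=1..emb S. l i * gen S i)"

definition ord :: "nat set \<Rightarrow> nat \<Rightarrow> nat" where
  "ord S s = Max {(\<Sum>i=1..emb S. l i) | l. is_repr S s l}"

definition gen_upto :: "nat set \<Rightarrow> nat \<Rightarrow> nat set" where
  "gen_upto S k = {(\<Sum>j=1..k. l j * gen S j) | l. True}"

definition tau :: "nat set \<Rightarrow> nat \<Rightarrow> nat" where
  "tau S i = (LEAST h. h > 0 \<and> h * gen S i \<in> gen_upto S (i - 1)) - 1"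

definition alpha :: "nat set \<Rightarrow> nat \<Rightarrow> nat" where
  "alpha S i = Max {h. h * gen S i \<in> Apery S}"

definition beta :: "nat set \<Rightarrow> nat \<Rightarrow> nat" where
  "beta S i = Max {h. h * gen S i \<in> Apery S \<and> ord S (h * gen S i) = h}"

definition box :: "nat set \<Rightarrow> (nat \<Rightarrow> nat) \<Rightarrow> nat set" where
  "box S d = {(\<Sum>i=2..emb S. l i * gen S i) | l. \<forall>i\<in>{2..emb S}. l i \<le> d i}"

definition telescopic :: "nat set \<Rightarrow> bool" where
  "telescopic S \<longleftrightarrow> Apery S = box S (tau S)"

definition rectangular :: "nat set \<Rightarrow> (nat \<Rightarrow> nat) \<Rightarrow> bool" where
  "rectangular S d \<longleftrightarrow> Apery S = box S d"

end

theory Submission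
  imports Defs
begin

text \<open>
  In a telescopic semigroup \<open>Ap(S)\<close> is the box with bounds \<open>\<tau>\<^sub>i\<close>, and the coefficients of a box
  element are determined by its residue modulo \<open>m\<close>: if two box expressions agreed modulo \<open>m\<close>
  but differed in their last coefficient, at index \<open>K\<close>, then some \<open>d g\<^sub>K\<close> with \<open>0 < d \<le> \<tau>\<^sub>K\<close>
  would be congruent to, and hence (both lying in \<open>Ap(S)\<close>) equal to, an element of
  \<open>\<langle>g\<^sub>1, \<dots>, g\<^sub>K\<^sub>-\<^sub>1\<rangle>\<close>, against the minimality of \<open>\<tau>\<^sub>K\<close>.
  Every representation can be rewritten into box form without getting shorter, because
  \<open>(\<tau>\<^sub>i + 1) g\<^sub>i\<close> is a combination of smaller generators with more than \<open>\<tau>\<^sub>i + 1\<close> summands.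
  Hence \<open>\<tau>\<^sub>i g\<^sub>i\<close> has order exactly \<open>\<tau>\<^sub>i\<close>, whereas \<open>h g\<^sub>i\<close> has order \<open>> h\<close> for \<open>h > \<tau>\<^sub>i\<close>;
  so \<open>\<beta>\<^sub>i = \<tau>\<^sub>i\<close>. For \<open>\<langle>4, 5, 6\<rangle>\<close> the Apery set \<open>{0, 5, 6, 11}\<close> is the box with all bounds
  \<open>1 = \<alpha>\<^sub>i = \<beta>\<^sub>i\<close>, but \<open>\<tau>\<^sub>2 = 3\<close> (as \<open>4 \<cdot> 5 = 5 \<cdot> 4\<close>) puts \<open>10 \<notin> Ap(S)\<close> into the \<open>\<tau>\<close>-box.
\<close>

lemma sum_extend_zero:
  fixes f :: "nat \<Rightarrow> 'a::comm_monoid_add"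
  assumes "k \<le> n"
  shows "(\<Sum>j=a..k. f j) = (\<Sum>j=a..n. if j \<le> k then f j else 0)"
proof -
  have "{j \<in> {a..n}. j \<le> k} = {a..k}" using assms by auto
  then show ?thesis by (simp flip: sum.inter_filter)
qed

lemma sum_split_first:
  fixes f :: "nat \<Rightarrow> 'a::comm_monoid_add"
  shows "1 \<le> k \<Longrightarrow> (\<Sum>j=1..k. f j) = f 1 + (\<Sum>j=2..k. f j)"
  using sum.atLeast_Suc_atMost[of 1 k f] by (simp add: numeral_2_eq_2)

lemma sum_single_term:
  fixes f :: "nat \<Rightarrow> nat"
  assumes "finite A"
  shows "(\<Sum>j\<in>A. (if j = i then h else 0) * f j) = (if i \<in> A then h * f i else 0)"
proof -
  have "(\<Sum>j\<in>A. (if j = i then h else 0) * f j) = (\<Sum>j\<in>A. if j = i then h * f j else 0)"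
    by (rule sum.cong) auto
  then show ?thesis using assms by simp
qed

lemma add_pred_mult_eq:
  fixes m :: nat
  shows "0 < m \<Longrightarrow> a + (m - 1) * a = a * m"
  by (cases m) simp_all

text \<open>In \<open>nat\<close>, \<open>(m - 1) * a\<close> stands for \<open>-a\<close> modulo \<open>m\<close>.\<close>
lemma mod_add_subtract_nat:
  fixes m :: nat
  assumes "0 < m" "(x + a) mod m = b mod m"
  shows "x mod m = (b + (m - 1) * a) mod m"
proof -
  have "x mod m = (x + a * m) mod m" by simp
  also have "\<dots> = (x + a + (m - 1) * a) mod m" using add_pred_mult_eq[OF assms(1)] by (simp add: add.assoc)
  also have "\<dots> = (b + (m - 1) * a) mod m" using assms(2) by (metis mod_add_left_eq)
  finally show ?thesis .
qed

lemma mod_add_cancel_right_nat: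
  fixes m :: nat
  assumes "0 < m" "(x + c) mod m = (y + c) mod m"
  shows "x mod m = y mod m"
proof -
  have "x mod m = (y + c + (m - 1) * c) mod m" by (rule mod_add_subtract_nat[OF assms])
  also have "\<dots> = (y + c * m) mod m" using add_pred_mult_eq[OF assms(1)] by (simp add: add.assoc)
  finally show ?thesis by simp
qed

lemma box_cong: "(\<And>i. i \<in> {2..emb S} \<Longrightarrow> d i = d' i) \<Longrightarrow> box S d = box S d'"
proof -
  assume "\<And>i. i \<in> {2..emb S} \<Longrightarrow> d i = d' i"
  then have "(\<forall>i\<in>{2..emb S}. l i \<le> d i) \<longleftrightarrow> (\<forall>i\<in>{2..emb S}. l i \<le> d' i)" for l by simp
  then show ?thesis unfolding box_def by simp
qed

lemma gen_upto_add: "x \<in> gen_upto S k \<Longrightarrow> y \<in> gen_upto S k \<Longrightarrow> x + y \<in> gen_upto S k"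
proof -
  assume "x \<in> gen_upto S k" "y \<in> gen_upto S k"
  then obtain l l' where "x = (\<Sum>j=1..k. l j * gen S j)" "y = (\<Sum>j=1..k. l' j * gen S j)"
    unfolding gen_upto_def by blast
  then have "x + y = (\<Sum>j=1..k. (l j + l' j) * gen S j)" by (simp add: sum.distrib add_mult_distrib)
  then show ?thesis unfolding gen_upto_def by (intro CollectI exI[of _ "\<lambda>j. l j + l' j"]) simp
qed

lemma gen_upto_mult: "x \<in> gen_upto S k \<Longrightarrow> c * x \<in> gen_upto S k"
proof -
  assume "x \<in> gen_upto S k"
  then obtain l where "x = (\<Sum>j=1..k. l j * gen S j)" unfolding gen_upto_def by blast
  then have "c * x = (\<Sum>j=1..k. (c * l j) * gen S j)" by (simp add: sum_distrib_left mult.assoc)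
  then show ?thesis unfolding gen_upto_def by (intro CollectI exI[of _ "\<lambda>j. c * l j"]) simp
qed

lemma sum_mem_gen_upto: "(\<Sum>j=2..k. l j * gen S j) \<in> gen_upto S k"
proof -
  have "(\<Sum>j=2..k. l j * gen S j) = (\<Sum>j=1..k. (l(1 := 0)) j * gen S j)"
    by (rule sum.mono_neutral_cong_left) auto
  then show ?thesis unfolding gen_upto_def by (intro CollectI exI[of _ "l(1 := 0)"]) simp
qed

lemma is_repr_add: "is_repr S x l \<Longrightarrow> is_repr S y l' \<Longrightarrow> is_repr S (x + y) (\<lambda>j. l j + l' j)"
  unfolding is_repr_def by (simp add: sum.distrib add_mult_distrib)

text \<open>The assumption \<open>0 < emb S\<close> only serves to make \<open>msg S\<close> finite.\<close>
locale num_semigroup =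
  fixes S :: "nat set"
  assumes numerical: "numerical_semigroup S" and emb_pos: "0 < emb S"
begin

abbreviation "n \<equiv> emb S"
abbreviation "g \<equiv> gen S"
abbreviation "m \<equiv> multiplicity S"
abbreviation "T \<equiv> tau S"

lemma finite_msg: "finite (msg S)"
  using emb_pos card.infinite unfolding emb_def by force

lemma gen_mem_msg: "1 \<le> i \<Longrightarrow> i \<le> n \<Longrightarrow> g i \<in> msg S"
proof -
  assume "1 \<le> i" "i \<le> n"
  then have "i - 1 < length (sorted_list_of_set (msg S))" unfolding emb_def by simp
  then have "sorted_list_of_set (msg S) ! (i - 1) \<in> set (sorted_list_of_set (msg S))" by (rule nth_mem)
  then show ?thesis unfolding gen_def using finite_msg by simp
qed

lemma gen_pos: "1 \<le> i \<Longrightarrow> i \<le> n \<Longrightarrow> 0 < g i"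
  using gen_mem_msg unfolding msg_def by auto

lemma gen_mem: "1 \<le> i \<Longrightarrow> i \<le> n \<Longrightarrow> g i \<in> S"
  using gen_mem_msg unfolding msg_def by auto

lemma gen_less: "1 \<le> j \<Longrightarrow> j < i \<Longrightarrow> i \<le> n \<Longrightarrow> g j < g i"
proof -
  assume "1 \<le> j" "j < i" "i \<le> n"
  then have "j - 1 < i - 1" "i - 1 < length (sorted_list_of_set (msg S))" unfolding emb_def by auto
  moreover have "sorted_wrt (<) (sorted_list_of_set (msg S))" using finite_msg by simp
  ultimately show ?thesis unfolding gen_def using sorted_wrt_nth_less by blast
qed

lemma multiplicity_eq: "m = g 1"
  unfolding multiplicity_def ..

lemma multiplicity_pos: "0 < m"
  using gen_pos emb_pos by (simp add: multiplicity_eq)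

lemma zero_mem: "0 \<in> S" and add_mem: "a \<in> S \<Longrightarrow> b \<in> S \<Longrightarrow> a + b \<in> S"
  using numerical unfolding numerical_semigroup_def by auto

lemma mult_mem: "x \<in> S \<Longrightarrow> k * x \<in> S"
  by (induction k) (auto simp: zero_mem add_mem)

lemma multiplicity_mem: "m \<in> S"
  using gen_mem emb_pos by (simp add: multiplicity_eq)

lemma Apery_eq_if_mod_eq:
  assumes "a \<in> Apery S" "b \<in> Apery S" "a mod m = b mod m"
  shows "a = b"
proof -
  have "x = y" if xy: "x \<in> Apery S" "y \<in> Apery S" "x mod m = y mod m" "x \<le> y" for x y
  proof (rule ccontr)
    assume "x \<noteq> y"
    obtain q where "y = x + m * q" using xy(3,4) by (rule mod_eq_nat2E)
    with \<open>x \<noteq> y\<close> obtain p where "y = (x + p * m) + m" by (cases q) auto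
    moreover have "x + p * m \<in> S"
      using xy(1) multiplicity_mem by (auto simp: Apery_def intro: add_mem mult_mem)
    ultimately show False using xy(2) unfolding Apery_def by blast
  qed
  from this[of a b] this[of b a] show ?thesis using assms nat_le_linear[of a b] by argo
qed

lemma multiplicity_multiple_mem_gen_upto:
  assumes "2 \<le> i" "i \<le> n"
  shows "m * g i \<in> gen_upto S (i - 1)"
proof -
  have "1 \<le> i - 1" using assms(1) by simp
  then have "(\<Sum>j=1..i-1. (if j = 1 then g i else 0) * g j) = g i * g 1"
    by (simp add: sum_single_term)
  then show ?thesis unfolding gen_upto_def multiplicity_eq
    by (intro CollectI exI[of _ "\<lambda>j. if j = 1 then g i else 0"]) (simp add: mult.commute)
qed

lemma tau_Suc_eq_Least:
  assumes "2 \<le> i" "i \<le> n"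
  shows "T i + 1 = (LEAST h. 0 < h \<and> h * g i \<in> gen_upto S (i - 1))"
proof -
  have "0 < m \<and> m * g i \<in> gen_upto S (i - 1)"
    using multiplicity_pos multiplicity_multiple_mem_gen_upto assms by blast
  then have "0 < (LEAST h. 0 < h \<and> h * g i \<in> gen_upto S (i - 1))" by (rule LeastI2_ex[OF exI]) blast
  then show ?thesis unfolding tau_def by simp
qed

lemma tau_relation:
  assumes "2 \<le> i" "i \<le> n"
  shows "(T i + 1) * g i \<in> gen_upto S (i - 1)"
  unfolding tau_Suc_eq_Least[OF assms]
  by (rule LeastI2_ex) (use multiplicity_pos multiplicity_multiple_mem_gen_upto assms in blast)+

lemma tau_minimal:
  assumes "2 \<le> i" "i \<le> n" "0 < h" "h \<le> T i"
  shows "h * g i \<notin> gen_upto S (i - 1)"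
proof -
  have "h < (LEAST h. 0 < h \<and> h * g i \<in> gen_upto S (i - 1))"
    using assms(4) tau_Suc_eq_Least[OF assms(1,2)] by simp
  then show ?thesis using not_less_Least assms(3) by blast
qed

lemma gen_upto_length_gt:
  assumes "2 \<le> i" "i \<le> n" "0 < h" and C: "h * g i = (\<Sum>j=1..i-1. C j * g j)"
  shows "h < (\<Sum>j=1..i-1. C j)"
proof (rule ccontr)
  assume "\<not> h < (\<Sum>j=1..i-1. C j)"
  have "h * g i \<le> (\<Sum>j=1..i-1. C j * (g i - 1))"
    unfolding C using gen_less[of _ i] assms(1,2) by (intro sum_mono mult_le_mono2) fastforce
  also have "\<dots> = (\<Sum>j=1..i-1. C j) * (g i - 1)" by (simp add: sum_distrib_right)
  also have "\<dots> \<le> h * (g i - 1)" using \<open>\<not> h < (\<Sum>j=1..i-1. C j)\<close> by simp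
  also have "\<dots> < h * g i" using assms(1-3) gen_pos[of i] by simp
  finally show False by simp
qed

lemma standard_representation:
  "k \<le> n \<Longrightarrow> \<exists>\<mu>. (\<Sum>j=1..k. \<mu> j * g j) = (\<Sum>j=1..k. c j * g j) \<and>
     (\<Sum>j=1..k. c j) \<le> (\<Sum>j=1..k. \<mu> j) \<and> (\<forall>j\<in>{2..k}. \<mu> j \<le> T j)"
proof (induction k arbitrary: c)
  case 0 then show ?case by auto
next
  case (Suc k)
  let ?K = "Suc k"
  show ?case
  proof (cases "k = 0")
    case True then show ?thesis by (intro exI[of _ c]) simp
  next
    case False
    then have K: "2 \<le> ?K" "?K \<le> n" using Suc.prems by auto
    obtain C where C: "(T ?K + 1) * g ?K = (\<Sum>j=1..k. C j * g j)"
      using tau_relation[OF K] unfolding gen_upto_def by auto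
    have len: "T ?K + 1 \<le> (\<Sum>j=1..k. C j)" using gen_upto_length_gt[OF K, of "T ?K + 1" C] C by simp
    txt \<open>Trade \<open>q (T K + 1)\<close> copies of \<open>g K\<close> for \<open>q\<close> copies of the longer right-hand side of \<open>C\<close>.\<close>
    define q r where "q = c ?K div (T ?K + 1)" and "r = c ?K mod (T ?K + 1)"
    have cK: "c ?K = q * (T ?K + 1) + r" unfolding q_def r_def by (rule div_mult_mod_eq[symmetric])
    have r: "r \<le> T ?K" by (simp add: r_def)
    obtain \<mu> where \<mu>: "(\<Sum>j=1..k. \<mu> j * g j) = (\<Sum>j=1..k. (c j + q * C j) * g j)"
        "(\<Sum>j=1..k. c j + q * C j) \<le> (\<Sum>j=1..k. \<mu> j)" "\<forall>j\<in>{2..k}. \<mu> j \<le> T j"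
      using Suc.IH[of "\<lambda>j. c j + q * C j"] Suc.prems by auto
    define \<mu>' where "\<mu>' j = (if j = ?K then r else \<mu> j)" for j
    have "(\<Sum>j=1..?K. \<mu>' j * g j) = (\<Sum>j=1..k. (c j + q * C j) * g j) + r * g ?K"
      using \<mu>(1) by (simp add: \<mu>'_def)
    also have "(\<Sum>j=1..k. (c j + q * C j) * g j) = (\<Sum>j=1..k. c j * g j) + q * ((T ?K + 1) * g ?K)"
      unfolding C by (simp add: sum.distrib sum_distrib_left algebra_simps)
    also have "\<dots> + r * g ?K = (\<Sum>j=1..k. c j * g j) + (q * (T ?K + 1) + r) * g ?K"
      by (simp add: algebra_simps)
    finally have val: "(\<Sum>j=1..?K. \<mu>' j * g j) = (\<Sum>j=1..?K. c j * g j)" by (simp add: cK)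
    have "(\<Sum>j=1..?K. c j) = (\<Sum>j=1..k. c j) + q * (T ?K + 1) + r" by (simp add: cK)
    also have "\<dots> \<le> (\<Sum>j=1..k. c j + q * C j) + r"
      using mult_le_mono2[OF len, of q] by (simp add: sum.distrib sum_distrib_left)
    also have "\<dots> \<le> (\<Sum>j=1..?K. \<mu>' j)" using \<mu>(2) by (simp add: \<mu>'_def)
    finally have "(\<Sum>j=1..?K. c j) \<le> (\<Sum>j=1..?K. \<mu>' j)" .
    with val show ?thesis using \<mu>(3) r by (intro exI[of _ \<mu>']) (auto simp: \<mu>'_def le_Suc_eq)
  qed
qed

lemma repr_length_le: "is_repr S x l \<Longrightarrow> (\<Sum>j=1..n. l j) \<le> x"
proof -
  assume "is_repr S x l"
  moreover have "(\<Sum>j=1..n. l j) \<le> (\<Sum>j=1..n. l j * g j)"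
    using gen_pos by (intro sum_mono) (force simp: Suc_le_eq)
  ultimately show ?thesis unfolding is_repr_def by simp
qed

lemma finite_repr_lengths: "finite {(\<Sum>j=1..n. l j) | l. is_repr S x l}"
  by (rule finite_subset[of _ "{..x}"]) (auto dest: repr_length_le)

lemma repr_length_le_ord: "is_repr S x l \<Longrightarrow> (\<Sum>j=1..n. l j) \<le> ord S x"
  unfolding ord_def by (rule Max_ge[OF finite_repr_lengths]) blast

lemma ord_eqI:
  "is_repr S x l\<^sub>0 \<Longrightarrow> (\<Sum>j=1..n. l\<^sub>0 j) = t \<Longrightarrow> (\<And>l. is_repr S x l \<Longrightarrow> (\<Sum>j=1..n. l j) \<le> t) \<Longrightarrow>
    ord S x = t"
  unfolding ord_def by (rule Max_eqI[OF finite_repr_lengths]) blast+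

lemma is_repr_single: "1 \<le> i \<Longrightarrow> i \<le> n \<Longrightarrow> is_repr S (h * g i) (\<lambda>j. if j = i then h else 0)"
  unfolding is_repr_def by (simp add: sum_single_term)

lemma is_repr_prefix: "k \<le> n \<Longrightarrow> is_repr S (\<Sum>j=1..k. c j * g j) (\<lambda>j. if j \<le> k then c j else 0)"
  unfolding is_repr_def by (subst sum_extend_zero[of k n]) (auto intro: sum.cong)

lemma ord_gt_if_tau_less:
  assumes "2 \<le> i" "i \<le> n" "T i < h"
  shows "h < ord S (h * g i)"
proof -
  obtain C where C: "(T i + 1) * g i = (\<Sum>j=1..i-1. C j * g j)"
    using tau_relation[OF assms(1,2)] unfolding gen_upto_def by auto
  have len: "T i + 1 < (\<Sum>j=1..i-1. C j)" using gen_upto_length_gt[OF assms(1,2) _ C] by simp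
  let ?\<nu> = "\<lambda>j. (if j \<le> i - 1 then C j else 0) + (if j = i then h - (T i + 1) else 0)"
  have "is_repr S ((T i + 1) * g i + (h - (T i + 1)) * g i) ?\<nu>"
    unfolding C using assms by (intro is_repr_add is_repr_prefix is_repr_single) auto
  moreover have "(T i + 1) * g i + (h - (T i + 1)) * g i = h * g i"
    using assms(3) add_mult_distrib[of "T i + 1" "h - (T i + 1)" "g i"] by simp
  moreover have "(\<Sum>j=1..n. ?\<nu> j) = (\<Sum>j=1..i-1. C j) + (h - (T i + 1))"
    using assms sum_extend_zero[where k = "i - 1" and n = n and a = 1 and f = C] by (simp add: sum.distrib)
  ultimately show ?thesis using repr_length_le_ord[of "h * g i" ?\<nu>] len assms(3) by simp
qed

lemma sum_mem_box:
  assumes "k \<le> n" "\<forall>j\<in>{2..k}. l j \<le> d j"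
  shows "(\<Sum>j=2..k. l j * g j) \<in> box S d"
proof -
  let ?l = "\<lambda>j. if j \<le> k then l j else 0"
  have "(\<Sum>j=2..k. l j * g j) = (\<Sum>j=2..n. ?l j * g j)"
    by (subst sum_extend_zero[OF assms(1)]) (auto intro: sum.cong)
  moreover have "\<forall>j\<in>{2..n}. ?l j \<le> d j" using assms(2) by auto
  ultimately show ?thesis unfolding box_def by (intro CollectI exI[of _ ?l]) simp
qed

lemma single_mem_box:
  assumes "2 \<le> i" "i \<le> n" "h \<le> d i"
  shows "h * g i \<in> box S d"
  using sum_mem_box[of i "\<lambda>j. if j = i then h else 0" d] assms by (simp add: sum_single_term)

lemma gen_upto_mod_eq_box:
  assumes "1 \<le> k" "k \<le> n" "x \<in> gen_upto S k"
  obtains y where "y \<in> box S T" "y \<in> gen_upto S k" "y mod m = x mod m"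
proof -
  obtain c where x: "x = (\<Sum>j=1..k. c j * g j)" using assms(3) unfolding gen_upto_def by blast
  obtain \<mu> where \<mu>: "(\<Sum>j=1..k. \<mu> j * g j) = x" "\<forall>j\<in>{2..k}. \<mu> j \<le> T j"
    using standard_representation[OF assms(2), of c] x by auto
  let ?y = "\<Sum>j=2..k. \<mu> j * g j"
  have "x = \<mu> 1 * m + ?y"
    using \<mu>(1) sum_split_first[OF assms(1), of "\<lambda>j. \<mu> j * g j"] by (simp add: multiplicity_eq)
  then have "?y mod m = x mod m" by simp
  then show ?thesis using that sum_mem_box[OF assms(2) \<mu>(2)] sum_mem_gen_upto by blast
qed

end

locale telescopic_semigroup = num_semigroup +
  assumes telescopic: "telescopic S"
begin

lemma Apery_eq_box: "Apery S = box S T"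
  using telescopic unfolding telescopic_def .

lemma tau_multiple_mod_neq_gen_upto:
  assumes "2 \<le> K" "K \<le> n" "0 < d" "d \<le> T K" "x \<in> gen_upto S (K - 1)"
  shows "(d * g K) mod m \<noteq> x mod m"
proof
  assume cong: "(d * g K) mod m = x mod m"
  have "1 \<le> K - 1" "K - 1 \<le> n" using assms(1,2) by simp_all
  then obtain y where y: "y \<in> box S T" "y \<in> gen_upto S (K - 1)" "y mod m = x mod m"
    using gen_upto_mod_eq_box assms(5) by blast
  have "d * g K \<in> box S T" using single_mem_box[of K d T] assms(1,2,4) by blast
  then have "d * g K = y" using Apery_eq_if_mod_eq[of "d * g K" y] y cong by (simp add: Apery_eq_box)
  then show False using tau_minimal[OF assms(1-4)] y(2) by simp
qed

lemma box_top_coeff_le: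
  assumes "2 \<le> K" "K \<le> n" "a K \<le> T K"
    and "((\<Sum>j=2..K-1. a j * g j) + a K * g K) mod m = ((\<Sum>j=2..K-1. b j * g j) + b K * g K) mod m"
  shows "a K \<le> b K"
proof (rule ccontr)
  assume "\<not> a K \<le> b K"
  define A B d where "A = (\<Sum>j=2..K-1. a j * g j)" and "B = (\<Sum>j=2..K-1. b j * g j)" and "d = a K - b K"
  have "a K * g K = d * g K + b K * g K" using \<open>\<not> a K \<le> b K\<close> by (simp add: d_def flip: add_mult_distrib)
  then have "(d * g K + A + b K * g K) mod m = (B + b K * g K) mod m"
    using assms(4) by (simp add: A_def B_def ac_simps)
  then have "(d * g K + A) mod m = B mod m" by (rule mod_add_cancel_right_nat[OF multiplicity_pos])
  then have "(d * g K) mod m = (B + (m - 1) * A) mod m" by (rule mod_add_subtract_nat[OF multiplicity_pos])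
  moreover have "B + (m - 1) * A \<in> gen_upto S (K - 1)"
    unfolding A_def B_def by (intro gen_upto_add gen_upto_mult sum_mem_gen_upto)
  moreover have "0 < d" "d \<le> T K" using \<open>\<not> a K \<le> b K\<close> assms(3) by (auto simp: d_def)
  ultimately show False using tau_multiple_mod_neq_gen_upto assms(1,2) by blast
qed

lemma box_coeffs_unique:
  "k \<le> n \<Longrightarrow> \<forall>j\<in>{2..k}. a j \<le> T j \<Longrightarrow> \<forall>j\<in>{2..k}. b j \<le> T j \<Longrightarrow>
    (\<Sum>j=2..k. a j * g j) mod m = (\<Sum>j=2..k. b j * g j) mod m \<Longrightarrow> \<forall>j\<in>{2..k}. a j = b j"
proof (induction k)
  case 0 then show ?case by simp
next
  case (Suc k)
  show ?case
  proof (cases "k = 0")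
    case True then show ?thesis by simp
  next
    case False
    then have K: "2 \<le> Suc k" "Suc k \<le> n" using Suc.prems(1) by auto
    have split: "(\<Sum>j=2..Suc k. f j) = (\<Sum>j=2..Suc k - 1. f j) + f (Suc k)" for f :: "nat \<Rightarrow> nat"
      using K by simp
    have eq: "((\<Sum>j=2..Suc k - 1. a j * g j) + a (Suc k) * g (Suc k)) mod m =
        ((\<Sum>j=2..Suc k - 1. b j * g j) + b (Suc k) * g (Suc k)) mod m"
      using Suc.prems(4) unfolding split .
    have "a (Suc k) \<le> T (Suc k)" "b (Suc k) \<le> T (Suc k)" using Suc.prems(2,3) K by auto
    then have top: "a (Suc k) = b (Suc k)"
      using box_top_coeff_le[OF K _ eq] box_top_coeff_le[OF K _ eq[symmetric]] by (simp add: le_antisym)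
    have "(\<Sum>j=2..k. a j * g j) mod m = (\<Sum>j=2..k. b j * g j) mod m"
      using mod_add_cancel_right_nat[OF multiplicity_pos eq[unfolded top]] by simp
    moreover have "k \<le> n" "\<forall>j\<in>{2..k}. a j \<le> T j" "\<forall>j\<in>{2..k}. b j \<le> T j"
      using Suc.prems(1-3) by auto
    ultimately have "\<forall>j\<in>{2..k}. a j = b j" using Suc.IH by blast
    then show ?thesis using top by (auto simp: le_Suc_eq)
  qed
qed

lemma ord_tau_multiple:
  assumes "2 \<le> i" "i \<le> n"
  shows "ord S (T i * g i) = T i"
proof -
  let ?\<rho> = "\<lambda>j. if j = i then T i else 0"
  have \<rho>: "(\<Sum>j=2..n. ?\<rho> j * g j) = T i * g i" "(\<Sum>j=2..n. ?\<rho> j) = T i"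
    using assms by (simp_all add: sum_single_term)
  show ?thesis
  proof (rule ord_eqI)
    show "is_repr S (T i * g i) ?\<rho>" using is_repr_single assms by simp
    show "(\<Sum>j=1..n. ?\<rho> j) = T i" using assms by simp
  next
    fix l assume l: "is_repr S (T i * g i) l"
    obtain \<mu> where \<mu>: "(\<Sum>j=1..n. \<mu> j * g j) = T i * g i" "(\<Sum>j=1..n. l j) \<le> (\<Sum>j=1..n. \<mu> j)"
        "\<forall>j\<in>{2..n}. \<mu> j \<le> T j"
      using standard_representation[of n l] l unfolding is_repr_def by auto
    have split: "(\<Sum>j=1..n. f j) = f 1 + (\<Sum>j=2..n. f j)" for f :: "nat \<Rightarrow> nat"
      by (rule sum_split_first) (use emb_pos in simp)
    have val: "\<mu> 1 * m + (\<Sum>j=2..n. \<mu> j * g j) = T i * g i"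
      using \<mu>(1) unfolding split by (simp add: multiplicity_eq)
    have "(\<Sum>j=2..n. \<mu> j * g j) mod m = (\<Sum>j=2..n. ?\<rho> j * g j) mod m"
      unfolding \<rho>(1) val[symmetric] by simp
    moreover have "\<forall>j\<in>{2..n}. ?\<rho> j \<le> T j" by simp
    ultimately have "\<forall>j\<in>{2..n}. \<mu> j = ?\<rho> j" using box_coeffs_unique[where b = ?\<rho>, OF order.refl \<mu>(3)] by blast
    then have "(\<Sum>j=2..n. \<mu> j * g j) = (\<Sum>j=2..n. ?\<rho> j * g j)" "(\<Sum>j=2..n. \<mu> j) = (\<Sum>j=2..n. ?\<rho> j)"
      by (auto intro: sum.cong)
    then have "(\<Sum>j=2..n. \<mu> j * g j) = T i * g i" "(\<Sum>j=2..n. \<mu> j) = T i" unfolding \<rho> .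
    then have "\<mu> 1 = 0" "(\<Sum>j=1..n. \<mu> j) = T i" using val multiplicity_pos unfolding split by simp_all
    then show "(\<Sum>j=1..n. l j) \<le> T i" using \<mu>(2) by simp
  qed
qed

lemma beta_eq_tau:
  assumes "2 \<le> i" "i \<le> n"
  shows "beta S i = T i"
proof -
  let ?B = "{h. h * g i \<in> Apery S \<and> ord S (h * g i) = h}"
  have "T i \<in> ?B"
    using single_mem_box[OF assms, of "T i" T] ord_tau_multiple[OF assms] by (simp add: Apery_eq_box)
  moreover have "?B \<subseteq> {..T i}"
  proof
    fix h assume "h \<in> ?B"
    then show "h \<in> {..T i}" using ord_gt_if_tau_less[OF assms, of h] by (cases "T i < h") auto
  qed
  ultimately show ?thesis unfolding beta_def by (intro Max_eqI) (auto intro: finite_subset)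
qed

lemma beta_rectangular: "rectangular S (beta S)"
  using box_cong[of S "beta S" T] beta_eq_tau unfolding rectangular_def Apery_eq_box by simp

end

lemma telescopic_imp_beta_rectangular:
  assumes "numerical_semigroup S" "telescopic S"
  shows "rectangular S (beta S)"
proof (cases "emb S = 0")
  case True
  then have "box S (beta S) = box S (tau S)" by (intro box_cong) auto
  then show ?thesis using assms(2) unfolding telescopic_def rectangular_def by simp
next
  case False
  then interpret telescopic_semigroup S using assms by unfold_locales auto
  show ?thesis by (rule beta_rectangular)
qed

definition S456 :: "nat set" where
  "S456 = {4 * a + 5 * b + 6 * c | a b c :: nat. True}"

lemma mem_S456_iff: "x \<in> S456 \<longleftrightarrow> x \<notin> {1, 2, 3, 7}"
proof
  assume "x \<in> S456"
  then obtain a b c where "x = 4 * a + 5 * b + 6 * c" unfolding S456_def by blast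
  then have "x \<noteq> 1 \<and> x \<noteq> 2 \<and> x \<noteq> 3 \<and> x \<noteq> 7" by presburger
  then show "x \<notin> {1, 2, 3, 7}" by simp
next
  assume "x \<notin> {1, 2, 3, 7}"
  then have "\<exists>a b c. x = 4 * a + 5 * b + 6 * c" by simp presburger
  then show "x \<in> S456" unfolding S456_def by blast
qed

lemma numerical_semigroup_S456: "numerical_semigroup S456"
proof -
  have "a + b \<in> S456" if ab: "a \<in> S456" "b \<in> S456" for a b
  proof -
    obtain a1 a2 a3 where "a = 4 * a1 + 5 * a2 + 6 * a3" using ab(1) unfolding S456_def by blast
    moreover obtain b1 b2 b3 where "b = 4 * b1 + 5 * b2 + 6 * b3" using ab(2) unfolding S456_def by blast
    ultimately have "a + b = 4 * (a1 + b1) + 5 * (a2 + b2) + 6 * (a3 + b3)" by simp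
    then show ?thesis unfolding S456_def by blast
  qed
  moreover have "finite (UNIV - S456)"
    by (rule finite_subset[of _ "{1, 2, 3, 7}"]) (auto simp: mem_S456_iff)
  ultimately show ?thesis unfolding numerical_semigroup_def by (simp add: mem_S456_iff)
qed

lemma msg_S456: "msg S456 = {4, 5, 6}"
proof -
  have "x \<in> msg S456 \<longleftrightarrow> x \<in> {4, 5, 6}" for x
    unfolding msg_def mem_Collect_eq Bex_def mem_S456_iff by simp presburger
  then show ?thesis by blast
qed

lemma emb_S456: "emb S456 = 3"
  unfolding emb_def msg_S456 by simp

text \<open>The index \<open>1\<close> also appears as \<open>Suc 0\<close> after simplification of sums over \<open>{1..k}\<close>.\<close>
lemma gen_S456: "gen S456 1 = 4" "gen S456 (Suc 0) = 4" "gen S456 2 = 5" "gen S456 3 = 6"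
  unfolding gen_def msg_S456 by simp_all

lemma Apery_S456: "Apery S456 = {0, 5, 6, 11}"
proof -
  have "x \<in> Apery S456 \<longleftrightarrow> x \<in> {0, 5, 6, 11}" for x
    unfolding Apery_def multiplicity_def gen_S456 mem_Collect_eq Bex_def mem_S456_iff
    by simp presburger
  then show ?thesis by blast
qed

lemma box_S456:
  assumes "d 2 = 1" "d 3 = 1"
  shows "box S456 d = {0, 5, 6, 11}"
proof -
  have "{2..3::nat} = {2, 3}" by auto
  then have box: "box S456 d = {l 2 * 5 + l 3 * 6 | l :: nat \<Rightarrow> nat. l 2 \<le> 1 \<and> l 3 \<le> 1}"
    unfolding box_def emb_S456 using assms by (simp add: gen_S456)
  have witness: "a * 5 + b * 6 \<in> box S456 d" if "a \<le> 1" "b \<le> 1" for a b :: nat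
    unfolding box using that by (intro CollectI exI[of _ "\<lambda>j. if j = 2 then a else b"]) simp
  show ?thesis
  proof
    show "box S456 d \<subseteq> {0, 5, 6, 11}" unfolding box by (auto simp: le_Suc_eq)
    show "{0, 5, 6, 11} \<subseteq> box S456 d" using witness[of 0 0] witness[of 1 0] witness[of 0 1] witness[of 1 1] by simp
  qed
qed

lemma num_semigroup_S456: "num_semigroup S456"
  by unfold_locales (simp_all add: numerical_semigroup_S456 emb_S456)

lemma ord_S456_eqI:
  assumes "x = 4 * a + 5 * b + 6 * c" "a + b + c = t"
    and "\<And>a b c. x = 4 * a + 5 * b + 6 * c \<Longrightarrow> a + b + c \<le> t"
  shows "ord S456 x = t"
proof -
  have "{1..3::nat} = {1, 2, 3}" by auto
  then have repr: "is_repr S456 x l \<longleftrightarrow> x = 4 * l 1 + 5 * l 2 + 6 * l 3"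
    and len: "(\<Sum>j=1..emb S456. l j) = l 1 + l 2 + l 3" for l
    unfolding is_repr_def emb_S456 by (simp_all add: gen_S456 ac_simps)
  let ?l = "\<lambda>j. if j = 1 then a else if j = 2 then b else c"
  show ?thesis
  proof (rule num_semigroup.ord_eqI[OF num_semigroup_S456])
    show "is_repr S456 x ?l" unfolding repr using assms(1) by simp
    show "(\<Sum>j=1..emb S456. ?l j) = t" unfolding len using assms(2) by simp
  next
    fix l assume "is_repr S456 x l"
    then show "(\<Sum>j=1..emb S456. l j) \<le> t" unfolding repr len by (rule assms(3))
  qed
qed

lemma ord_S456: "ord S456 0 = 0" "ord S456 5 = 1" "ord S456 6 = 1"
proof -
  show "ord S456 0 = 0" by (rule ord_S456_eqI[where a = 0 and b = 0 and c = 0]) simp_all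
  show "ord S456 5 = 1" by (rule ord_S456_eqI[where a = 0 and b = 1 and c = 0]) presburger+
  show "ord S456 6 = 1" by (rule ord_S456_eqI[where a = 0 and b = 0 and c = 1]) presburger+
qed

lemma alpha_beta_S456:
  assumes "i \<in> {2, 3}"
  shows "alpha S456 i = 1" "beta S456 i = 1"
proof -
  have "gen S456 i \<in> {5, 6}" using assms gen_S456 by auto
  then have "h * gen S456 i \<in> Apery S456 \<longleftrightarrow> h \<in> {0, 1}" for h
    unfolding Apery_S456 by auto presburger+
  moreover have "ord S456 (h * gen S456 i) = h" if "h \<in> {0, 1}" for h
    using that \<open>gen S456 i \<in> {5, 6}\<close> ord_S456 by auto
  ultimately have "{h. h * gen S456 i \<in> Apery S456} = {0, 1}"
    "{h. h * gen S456 i \<in> Apery S456 \<and> ord S456 (h * gen S456 i) = h} = {0, 1}" by auto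
  then show "alpha S456 i = 1" "beta S456 i = 1" unfolding alpha_def beta_def by simp_all
qed

lemma tau_S456: "tau S456 2 = 3"
proof -
  have "gen_upto S456 1 = {k * 4 | k. True}"
    unfolding gen_upto_def by (auto simp: gen_S456 intro: exI[of _ "\<lambda>_. k" for k])
  then have mem: "h * gen S456 2 \<in> gen_upto S456 (2 - 1) \<longleftrightarrow> 4 dvd h" for h
    by (simp add: gen_S456) presburger
  have "(LEAST h. 0 < h \<and> h * gen S456 2 \<in> gen_upto S456 (2 - 1)) = 4"
    unfolding mem by (rule Least_equality) (auto dest: dvd_imp_le)
  then show ?thesis unfolding tau_def by simp
qed

lemma not_telescopic_S456: "\<not> telescopic S456"
proof
  assume "telescopic S456"
  moreover have "2 * gen S456 2 \<in> box S456 (tau S456)"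
    by (rule num_semigroup.single_mem_box[OF num_semigroup_S456]) (simp_all add: emb_S456 tau_S456)
  ultimately have "2 * gen S456 2 \<in> Apery S456" unfolding telescopic_def by simp
  then show False unfolding Apery_S456 gen_S456 by simp
qed

theorem mainTheorem7:
  shows "(\<forall>S. numerical_semigroup S \<and> telescopic S \<longrightarrow> rectangular S (beta S)) \<and>
    (let S = {4 * a + 5 * b + 6 * c | a b c :: nat. True} in
       numerical_semigroup S \<and> rectangular S (alpha S) \<and> rectangular S (beta S) \<and>
       \<not> telescopic S)"
proof -
  have "rectangular S456 d" if "d 2 = 1" "d 3 = 1" for d
    unfolding rectangular_def Apery_S456 box_S456[OF that] ..
  then have "rectangular S456 (alpha S456)" "rectangular S456 (beta S456)"
    using alpha_beta_S456 by simp_all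
  then show ?thesis
    using telescopic_imp_beta_rectangular numerical_semigroup_S456 not_telescopic_S456
    unfolding Let_def S456_def[symmetric] by blast
qed

end
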